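(* Let $0<\mu<L_{\max}^{-1}$ with $L_{\max}=\max_i\|A_i\|_2^2$, let $\{x^n\}$ be generated by GAITA (as in the context) from an arbitrary $x^0\in\mathbf{R}^N$, and suppose $\{x^n\}$ converges to $x^*$. Let $I=Supp(x^* )$, $K=\|x^*\|_0$ and $e=\min_{i\in I}|x_i^*|$. Then $x^*$ is a strict local minimizer of $T_\lambda$ if either of the following holds: (a) $\lambda_{\min}(A_I^TA_I)>0$ and $0<\lambda<\frac{\lambda_{\min}(A_I^TA_I)\,e^{2-q}}{q(1-q)}$; (b) $\frac{\lambda_{\min}(A_I^TA_I)}{\max_i\|A_i\|_2^2}>\frac q2$ and $\frac{q}{2\lambda_{\min}(A_I^TA_I)}<\mu<\frac{1}{\max_i\|A_i\|_2^2}$.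
   Context: Let $A\in\mathbf{R}^{m\times N}$ have columns $A_1,\dots,A_N$, $y\in\mathbf{R}^m$, $\lambda>0$, $q\in(0,1)$, and $T_\lambda(x)=\frac12\|Ax-y\|_2^2+\lambda\sum_{i=1}^N|x_i|^q$. For a step size $\mu>0$ set $\tau_{\mu,q}=\frac{2-q}{2-2q}(2\lambda\mu(1-q))^{\frac{1}{2-q}}$ and $\eta_{\mu,q}=(2\lambda\mu(1-q))^{\frac{1}{2-q}}$. For $z\in\mathbf{R}$ let $prox_{\mu,\lambda|\cdot|^q}(z)=\arg\min_{v\in\mathbf{R}}\{\frac{(z-v)^2}{2\mu}+\lambda|v|^q\}$ (a single point when $|z|\neq\tau_{\mu,q}$). Define $\mathcal{T}(z,w)$ as the unique element of $prox_{\mu,\lambda|\cdot|^q}(z)$ if $|z|\neq\tau_{\mu,q}$, and, if $|z|=\tau_{\mu,q}$, as $sgn(z)\eta_{\mu,q}$ when $w\neq0$ and $0$ when $w=0$. GAITA: given $x^0\in\mathbf{R}^N$, for $n=0,1,2,\dots$ let $i=(n\bmod N)+1$, $z_i^n=x_i^n-\mu A_i^T(Ax^n-y)$, $x_i^{n+1}=\mathcal{T}(z_i^n,x_i^n)$, $x_j^{n+1}=x_j^n$ for $j\neq i$. $Supp(x)=\{i:x_i\neq0\}$. $A_I$ is the submatrix of $A$ with columns indexed by $I$, and $\lambda_{\min}(M)$ denotes the smallest eigenvalue of a symmetric matrix $M$. *)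

theory Defs
  imports Complex_Main "Jordan_Normal_Form.Char_Poly" "Jordan_Normal_Form.DL_Submatrix"
begin

definition T_obj :: "real mat \<Rightarrow> real vec \<Rightarrow> real \<Rightarrow> real \<Rightarrow> real vec \<Rightarrow> real" where
  "T_obj A y lam q x =
     (1/2) * (\<Sum>j<dim_row A. ((A *\<^sub>v x) $ j - y $ j)^2)
     + lam * (\<Sum>i<dim_col A. \<bar>x $ i\<bar> powr q)"

definition col_sqnorm :: "real mat \<Rightarrow> nat \<Rightarrow> real" where
  "col_sqnorm A i = (\<Sum>j<dim_row A. (A $$ (j, i))^2)"

definition Lmax :: "real mat \<Rightarrow> real" where
  "Lmax A = Max (col_sqnorm A ` {..<dim_col A})"

definition tau :: "real \<Rightarrow> real \<Rightarrow> real \<Rightarrow> real" where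
  "tau lam mu q = (2 - q) / (2 - 2*q) * (2*lam*mu*(1-q)) powr (1/(2-q))"

definition eta :: "real \<Rightarrow> real \<Rightarrow> real \<Rightarrow> real" where
  "eta lam mu q = (2*lam*mu*(1-q)) powr (1/(2-q))"

definition prox :: "real \<Rightarrow> real \<Rightarrow> real \<Rightarrow> real \<Rightarrow> real set" where
  "prox mu lam q z = {v. \<forall>w. (z - v)^2 / (2*mu) + lam * \<bar>v\<bar> powr q
                              \<le> (z - w)^2 / (2*mu) + lam * \<bar>w\<bar> powr q}"

definition thr :: "real \<Rightarrow> real \<Rightarrow> real \<Rightarrow> real \<Rightarrow> real \<Rightarrow> real" where
  "thr mu lam q z w =
     (if \<bar>z\<bar> \<noteq> tau lam mu q then (THE v. v \<in> prox mu lam q z)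
      else if w \<noteq> 0 then sgn z * eta lam mu q else 0)"

(* one GAITA step at iteration n (coordinate i = n mod N, 0-based) *)
definition gaita_step :: "real mat \<Rightarrow> real vec \<Rightarrow> real \<Rightarrow> real \<Rightarrow> real \<Rightarrow> nat \<Rightarrow> real vec \<Rightarrow> real vec" where
  "gaita_step A y lam q mu n x =
     (let N = dim_col A; i = n mod N;
          z = x $ i - mu * (col A i \<bullet> (A *\<^sub>v x - y))
      in vec N (\<lambda>j. if j = i then thr mu lam q z (x $ i) else x $ j))"

definition lambda_min :: "real mat \<Rightarrow> real" where
  "lambda_min M = Min {k. eigenvalue M k}"

definition supp :: "real vec \<Rightarrow> nat set" where
  "supp x = {i. i < dim_vec x \<and> x $ i \<noteq> 0}"

definition strict_local_min :: "nat \<Rightarrow> (real vec \<Rightarrow> real) \<Rightarrow> real vec \<Rightarrow> bool" where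
  "strict_local_min N f xs \<longleftrightarrow>
     (\<exists>\<delta>>0. \<forall>x. dim_vec x = N \<and> x \<noteq> xs \<and>
        sqrt (\<Sum>i<N. (x $ i - xs $ i)^2) < \<delta> \<longrightarrow> f xs < f x)"

end

(*
  The limit x* of GAITA is a fixed point of the coordinatewise thresholding. Every nonzero
  output of the thresholding operator has modulus at least eta and satisfies the first-order
  condition of its scalar proximal problem, and both properties pass to the limit along the
  steps that update a fixed coordinate: |x*_i| >= eta and
  A_i^T (A x* - y) + lam q sgn(x*_i) |x*_i|^(q-1) = 0 on the support I of x*.

  Near x*, split a perturbation h with |h_i| < delta along I. On I, a second-order Taylor
  bound for |t|^q and the first-order condition bound the increment of T_lam below by
  (lambda_min(A_I^T A_I) - lam q (1-q) (|x*_i| - delta)^(q-2)) h_i^2 / 2; condition (a), or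
  condition (b) together with |x*_i| >= eta, makes these coefficients positive for small delta.
  Off I, lam |h_i|^q dominates every term linear in |h_i| once delta is small, including the
  cross terms of ||A h||^2 between the two parts of h.
*)

theory Submission
  imports Defs "HOL-Analysis.Function_Topology"
begin

section \<open>The scalar proximal map of \<open>lam \<bar>.\<bar> powr q\<close>\<close>

definition prox_obj :: "real \<Rightarrow> real \<Rightarrow> real \<Rightarrow> real \<Rightarrow> real \<Rightarrow> real" where
  "prox_obj mu lam q z v = (z - v)^2 / (2*mu) + lam * \<bar>v\<bar> powr q"

lemma mem_prox_iff: "v \<in> prox mu lam q z \<longleftrightarrow> (\<forall>w. prox_obj mu lam q z v \<le> prox_obj mu lam q z w)"
  unfolding prox_def prox_obj_def by simp

lemma powr_le_powr_iff: fixes a b p :: real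
  assumes "a > 0" "b > 0" "p > 0" shows "a powr p \<le> b powr p \<longleftrightarrow> a \<le> b"
  using assms by (smt (verit) powr_less_mono2)

lemma powr_eq_powr_iff: fixes a b p :: real
  assumes "a > 0" "b > 0" "p > 0" shows "a powr p = b powr p \<longleftrightarrow> a = b"
  using assms by (smt (verit) powr_less_mono2)

lemma prox_obj_diff_zero:
  assumes mu: "mu > 0" and v: "v > 0" and z: "z = v + mu*lam*q * v powr (q - 1)"
  shows "2*mu * (prox_obj mu lam q z v - prox_obj mu lam q z 0)
       = v * (2*lam*mu*(1 - q) * v powr (q - 1) - v)"
proof -
  have "v powr q = v * v powr (q - 1)"
    using v by (simp add: powr_mult_base)
  then show ?thesis
    unfolding prox_obj_def z using mu v by (simp add: field_simps power2_eq_square)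
qed

context
  fixes mu lam q :: real
  assumes mu: "mu > 0" and lam: "lam > 0" and q0: "0 < q" and q1: "q < 1"
begin

lemma eta_pos: "eta lam mu q > 0"
  unfolding eta_def using mu lam q1 by simp

lemma eta_powr: "eta lam mu q powr (2 - q) = 2*lam*mu*(1 - q)"
  unfolding eta_def using mu lam q1 by (simp add: powr_powr)

lemma eta_compare:
  assumes v: "v > 0"
  shows "eta lam mu q \<le> v \<longleftrightarrow> 2*lam*mu*(1 - q) * v powr (q - 1) \<le> v"
    and "eta lam mu q = v \<longleftrightarrow> 2*lam*mu*(1 - q) * v powr (q - 1) = v"
proof -
  define c where "c = 2*lam*mu*(1 - q)"
  have split: "v = v powr (q - 1) * v powr (2 - q)"
    using v by (simp flip: powr_add)
  have P: "v powr (q - 1) > 0" using v by simp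
  have "c * v powr (q - 1) \<le> v \<longleftrightarrow> c \<le> v powr (2 - q)"
    by (subst (2) split) (use P in \<open>simp add: mult.commute\<close>)
  moreover have "c * v powr (q - 1) = v \<longleftrightarrow> c = v powr (2 - q)"
    by (subst (2) split) (use P in \<open>simp add: mult.commute\<close>)
  moreover have "eta lam mu q \<le> v \<longleftrightarrow> c \<le> v powr (2 - q)"
    using powr_le_powr_iff[OF eta_pos v, of "2 - q"] q1 by (simp add: eta_powr c_def)
  moreover have "eta lam mu q = v \<longleftrightarrow> c = v powr (2 - q)"
    using powr_eq_powr_iff[OF eta_pos v, of "2 - q"] q1 by (simp add: eta_powr c_def)
  ultimately show "eta lam mu q \<le> v \<longleftrightarrow> c * v powr (q - 1) \<le> v"
    and "eta lam mu q = v \<longleftrightarrow> c * v powr (q - 1) = v" by simp_all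
qed

lemma tau_eq: "tau lam mu q = eta lam mu q + mu*lam*q * eta lam mu q powr (q - 1)"
proof -
  define E where "E = eta lam mu q"
  have "(mu*lam*q * E powr (q - 1)) * (2 - 2*q) = q * (2*lam*mu*(1 - q) * E powr (q - 1))"
    by (simp add: algebra_simps)
  also have "\<dots> = q * E"
    using eta_compare(2)[OF eta_pos] unfolding E_def by simp
  finally have "mu*lam*q * E powr (q - 1) = q / (2 - 2*q) * E"
    using q1 by (simp add: field_simps)
  moreover have "tau lam mu q = (2 - q) / (2 - 2*q) * E"
    unfolding tau_def eta_def E_def by simp
  moreover have "(2 - q) / (2 - 2*q) = 1 + q / (2 - 2*q)"
    using q1 by (simp add: field_simps)
  ultimately show ?thesis
    unfolding E_def[symmetric] by (simp add: distrib_right)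
qed

lemma tau_pos: "tau lam mu q > 0"
  using tau_eq eta_pos mu lam q0 by (simp add: add_pos_nonneg)

lemma prox_uminus: "v \<in> prox mu lam q z \<Longrightarrow> -v \<in> prox mu lam q (-z)"
  unfolding mem_prox_iff
proof
  fix w assume "\<forall>w. prox_obj mu lam q z v \<le> prox_obj mu lam q z w"
  from this[rule_format, of "-w"]
  show "prox_obj mu lam q (-z) (-v) \<le> prox_obj mu lam q (-z) w"
    unfolding prox_obj_def by (simp add: power2_eq_square algebra_simps)
qed

lemma prox_nonempty: "\<exists>v. v \<in> prox mu lam q z"
proof -
  define R where "R = 2*\<bar>z\<bar> + 1"
  have "continuous_on {-R..R} (prox_obj mu lam q z)"
    unfolding prox_obj_def using q0 mu by (intro continuous_intros continuous_on_powr') auto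
  moreover have "{-R..R} \<noteq> {}" unfolding R_def by simp
  ultimately obtain v where
    v_min: "\<forall>w\<in>{-R..R}. prox_obj mu lam q z v \<le> prox_obj mu lam q z w"
    using continuous_attains_inf[OF compact_Icc] by blast
  have "prox_obj mu lam q z v \<le> prox_obj mu lam q z w" for w
  proof (cases "w \<in> {-R..R}")
    case False
    \<comment> \<open>far from \<open>z\<close>, the quadratic term alone exceeds the value at \<open>0\<close>\<close>
    then have "\<bar>z - w\<bar> > \<bar>z\<bar>" unfolding R_def by auto
    then have "z^2 < (z - w)^2"
      by (metis abs_ge_zero power2_abs power_strict_mono zero_less_numeral)
    then have "z^2 / (2*mu) < (z - w)^2 / (2*mu)"
      using mu by (simp add: divide_strict_right_mono)
    moreover have "lam * \<bar>w\<bar> powr q \<ge> 0" using lam by simp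
    ultimately have "prox_obj mu lam q z 0 < prox_obj mu lam q z w"
      unfolding prox_obj_def using q0 by simp
    moreover have "0 \<in> {-R..R}" unfolding R_def by simp
    ultimately show ?thesis using v_min by fastforce
  qed (use v_min in auto)
  then show ?thesis unfolding mem_prox_iff by blast
qed

lemma prox_sign:
  assumes "v \<in> prox mu lam q z" "v \<noteq> 0" shows "z * v > 0"
proof (rule ccontr)
  assume "\<not> z * v > 0"
  then have "(z + v)^2 \<le> (z - v)^2"
    by (simp add: power2_eq_square algebra_simps)
  then have "prox_obj mu lam q z (-v) \<le> prox_obj mu lam q z v"
    unfolding prox_obj_def using mu by (simp add: divide_right_mono)
  moreover have "prox_obj mu lam q z v \<le> prox_obj mu lam q z (-v)"
    using assms(1) unfolding mem_prox_iff by blast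
  \<comment> \<open>so \<open>-v\<close> is a minimizer as well, and then \<open>z = 0\<close>, where \<open>v\<close> loses to \<open>0\<close>\<close>
  ultimately have "(z + v)^2 = (z - v)^2"
    unfolding prox_obj_def using mu by (simp add: field_simps)
  then have "z = 0" using assms(2) by (simp add: power2_eq_square algebra_simps)
  moreover have "prox_obj mu lam q z v \<le> prox_obj mu lam q z 0"
    using assms(1) unfolding mem_prox_iff by blast
  moreover have "prox_obj mu lam q 0 0 < prox_obj mu lam q 0 v"
    unfolding prox_obj_def using assms(2) mu lam by (simp add: add_pos_pos)
  ultimately show False by simp
qed

lemma prox_stationary:
  assumes "v \<in> prox mu lam q z" "v > 0"
  shows "z = v + mu*lam*q * v powr (q - 1)"
proof -
  define G where "G w = (z - w)^2 / (2*mu) + lam * w powr q" for w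
  have "(G has_real_derivative (v - z)/mu + lam * (q * v powr (q - 1))) (at v)"
    unfolding G_def using assms(2) mu
    by (auto intro!: derivative_eq_intros simp: power2_eq_square field_simps)
  moreover have "\<forall>w. \<bar>v - w\<bar> < v \<longrightarrow> G v \<le> G w"
    using assms unfolding mem_prox_iff prox_obj_def G_def
    by (metis abs_of_pos abs_diff_less_iff diff_self diff_less_eq add_0)
  ultimately have "(v - z)/mu + lam * (q * v powr (q - 1)) = 0"
    using DERIV_local_min assms(2) by blast
  then show ?thesis using mu by (simp add: field_simps)
qed

lemma prox_ge_eta:
  assumes "v \<in> prox mu lam q z" "v > 0" shows "v \<ge> eta lam mu q"
proof -
  have "prox_obj mu lam q z v \<le> prox_obj mu lam q z 0"
    using assms(1) unfolding mem_prox_iff by blast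
  then have "2*mu * (prox_obj mu lam q z v - prox_obj mu lam q z 0) \<le> 0"
    using mu by (simp add: mult_nonneg_nonpos)
  then have "v * (2*lam*mu*(1 - q) * v powr (q - 1) - v) \<le> 0"
    using prox_obj_diff_zero[OF mu assms(2) prox_stationary[OF assms]] by simp
  then show ?thesis
    using eta_compare(1) assms(2) by (simp add: mult_le_0_iff)
qed

lemma prox_zero_imp_tau:
  assumes "v \<in> prox mu lam q z" "v > 0" "0 \<in> prox mu lam q z"
  shows "z = tau lam mu q"
proof -
  have "prox_obj mu lam q z v = prox_obj mu lam q z 0"
    using assms(1,3) unfolding mem_prox_iff by (meson order_antisym)
  then have "2*lam*mu*(1 - q) * v powr (q - 1) = v"
    using prox_obj_diff_zero[OF mu assms(2) prox_stationary[OF assms(1,2)]] assms(2) by simp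
  then have "eta lam mu q = v" using eta_compare(2)[OF assms(2)] by simp
  then show ?thesis using prox_stationary[OF assms(1,2)] tau_eq by simp
qed

lemma stationary_map_strict_mono:
  assumes "eta lam mu q \<le> v" "v < w"
  shows "v + mu*lam*q * v powr (q - 1) < w + mu*lam*q * w powr (q - 1)"
proof (rule DERIV_pos_imp_increasing[OF assms(2)])
  fix s assume s: "v \<le> s" "s \<le> w"
  have s0: "s > 0" using s assms eta_pos by linarith
  \<comment> \<open>on \<open>[eta, \<infinity>)\<close> the derivative \<open>1 - mu lam q (1 - q) s^(q-2)\<close> stays \<open>\<ge> 1 - q/2\<close>\<close>
  have "s powr (q - 2) \<le> eta lam mu q powr (q - 2)"
    using powr_mono2'[of "q - 2" "eta lam mu q" s] q1 eta_pos assms s by simp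
  also have "\<dots> = 1 / (2*lam*mu*(1 - q))"
    using eta_powr by (simp add: powr_minus_divide[of _ "2 - q", simplified] powr_minus_divide)
  finally have "mu*lam*q * (1 - q) * s powr (q - 2) \<le> mu*lam*q * (1 - q) * (1 / (2*lam*mu*(1 - q)))"
    using mu lam q0 q1 by (intro mult_left_mono) auto
  also have "\<dots> = q / 2" using mu lam q1 by (simp add: field_simps)
  finally have "1 + mu*lam*q * ((q - 1) * s powr (q - 1 - 1)) > 0"
    using q1 by (simp add: algebra_simps)
  moreover have "((\<lambda>s. s + mu*lam*q * s powr (q - 1)) has_real_derivative
      1 + mu*lam*q * ((q - 1) * s powr (q - 1 - 1))) (at s)"
    using s0 by (auto intro!: derivative_eq_intros)
  ultimately show "\<exists>d. ((\<lambda>s. s + mu*lam*q * s powr (q - 1)) has_real_derivative d) (at s) \<and> 0 < d"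
    by blast
qed

lemma prox_unique:
  assumes "\<bar>z\<bar> \<noteq> tau lam mu q" "v \<in> prox mu lam q z" "w \<in> prox mu lam q z"
  shows "v = w"
proof -
  have pos: "v = w"
    if "z > 0" "\<bar>z\<bar> \<noteq> tau lam mu q" "v \<in> prox mu lam q z" "w \<in> prox mu lam q z" for z v w
  proof -
    have nonneg: "u \<ge> 0" if "u \<in> prox mu lam q z" for u
      using prox_sign[OF that] \<open>z > 0\<close> by (cases "u = 0") (auto simp: zero_less_mult_iff)
    show ?thesis
    proof (cases "v = 0 \<or> w = 0")
      case True
      then show ?thesis
        using prox_zero_imp_tau that nonneg by (metis abs_of_pos less_eq_real_def)
    next
      case False
      then have "v > 0" "w > 0" using nonneg that by (auto simp: less_le)
      then show ?thesis
        using stationary_map_strict_mono prox_stationary prox_ge_eta that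
        by (metis linorder_neqE_linordered_idom less_irrefl)
    qed
  qed
  consider "z = 0" | "z > 0" | "-z > 0" by linarith
  then show ?thesis
  proof cases
    case 1
    then show ?thesis using prox_sign[OF assms(2)] prox_sign[OF assms(3)] by fastforce
  next
    case 2
    then show ?thesis using pos assms by blast
  next
    case 3
    then show ?thesis using pos[of "-z" "-v" "-w"] prox_uminus assms by simp
  qed
qed

lemma thr_in_prox:
  assumes "\<bar>z\<bar> \<noteq> tau lam mu q" shows "thr mu lam q z w \<in> prox mu lam q z"
proof -
  have "\<exists>!v. v \<in> prox mu lam q z" using prox_nonempty prox_unique[OF assms] by blast
  then have "(THE v. v \<in> prox mu lam q z) \<in> prox mu lam q z" by (rule theI')
  then show ?thesis unfolding thr_def using assms by simp
qed

lemma thr_nonzero: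
  assumes "thr mu lam q z w \<noteq> 0"
  shows "eta lam mu q \<le> \<bar>thr mu lam q z w\<bar>"
    and "z = thr mu lam q z w + mu*lam*q * sgn (thr mu lam q z w) * \<bar>thr mu lam q z w\<bar> powr (q - 1)"
proof -
  define t where "t = thr mu lam q z w"
  have "eta lam mu q \<le> \<bar>t\<bar> \<and> z = t + mu*lam*q * sgn t * \<bar>t\<bar> powr (q - 1)"
  proof (cases "\<bar>z\<bar> = tau lam mu q")
    case False
    then have tp: "t \<in> prox mu lam q z" unfolding t_def by (rule thr_in_prox)
    consider "t > 0" | "-t > 0" using assms t_def by linarith
    then show ?thesis
    proof cases
      case 1
      then show ?thesis using prox_ge_eta[OF tp] prox_stationary[OF tp] by simp
    next
      case 2
      with prox_uminus[OF tp] show ?thesis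
        using prox_ge_eta prox_stationary by fastforce
    qed
  next
    case True
    \<comment> \<open>the tie-break value \<open>sgn z * eta\<close> satisfies the first-order condition as well,
      since \<open>tau = eta + mu lam q eta^(q-1)\<close>\<close>
    then have "z \<noteq> 0" using tau_pos by auto
    moreover have "t = sgn z * eta lam mu q"
      using True assms unfolding t_def thr_def by (auto split: if_splits)
    ultimately show ?thesis
      using True tau_eq eta_pos by (cases "z > 0") (auto simp: abs_mult)
  qed
  then show "eta lam mu q \<le> \<bar>t\<bar>" and "z = t + mu*lam*q * sgn t * \<bar>t\<bar> powr (q - 1)"
    by simp_all
qed

lemma thr_limit:
  assumes v: "v \<longlonglongrightarrow> a" and a: "a \<noteq> 0" and z: "z \<longlonglongrightarrow> b"
    and thr: "\<And>k. v k = thr mu lam q (z k) (w k)"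
  shows "eta lam mu q \<le> \<bar>a\<bar>" and "b = a + mu*lam*q * sgn a * \<bar>a\<bar> powr (q - 1)"
proof -
  have ev: "eventually (\<lambda>k. v k \<noteq> 0) sequentially"
    using tendsto_imp_eventually_ne[OF v a] .
  have "eventually (\<lambda>k. eta lam mu q \<le> \<bar>v k\<bar>) sequentially"
    using ev by eventually_elim (use thr_nonzero(1) thr in metis)
  then show "eta lam mu q \<le> \<bar>a\<bar>"
    using tendsto_lowerbound[OF tendsto_rabs[OF v]] by simp
  have "(\<lambda>k. v k + mu*lam*q * sgn (v k) * \<bar>v k\<bar> powr (q - 1))
      \<longlonglongrightarrow> a + mu*lam*q * sgn a * \<bar>a\<bar> powr (q - 1)"
    using a by (intro tendsto_intros v tendsto_sgn) auto
  moreover have "eventually (\<lambda>k. v k + mu*lam*q * sgn (v k) * \<bar>v k\<bar> powr (q - 1) = z k) sequentially"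
    using ev by eventually_elim (use thr_nonzero(2) thr in metis)
  ultimately have "z \<longlonglongrightarrow> a + mu*lam*q * sgn a * \<bar>a\<bar> powr (q - 1)"
    by (rule Lim_transform_eventually)
  then show "b = a + mu*lam*q * sgn a * \<bar>a\<bar> powr (q - 1)"
    using z LIMSEQ_unique by blast
qed

end

section \<open>A second-order lower bound for \<open>\<bar>t\<bar> powr q\<close>\<close>

lemma powr_ge_second_order:
  fixes a d t q :: real
  assumes q0: "0 < q" and q1: "q < 1" and d: "0 < d" "d < a" and t: "\<bar>t - a\<bar> \<le> d"
  shows "t powr q \<ge> a powr q + q * a powr (q - 1) * (t - a) - q*(1 - q)/2 * (a - d) powr (q - 2) * (t - a)^2"
proof (cases "t = a")
  case False
  define D where "D m s = (if m = 0 then s powr q else if m = 1 then q * s powr (q - 1)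
                           else q * (q - 1) * s powr (q - 2))" for m :: nat and s :: real
  have "(D m has_real_derivative D (Suc m) s) (at s)" if "m < 2" "a - d \<le> s" for m s
  proof -
    have "s > 0" using that d by simp
    moreover have "m = 0 \<or> m = 1" using that by auto
    ultimately show ?thesis
      unfolding D_def[abs_def] by (auto intro!: derivative_eq_intros simp: algebra_simps)
  qed
  then obtain \<xi> where \<xi>: "if t < a then t < \<xi> \<and> \<xi> < a else a < \<xi> \<and> \<xi> < t"
    and taylor: "D 0 t = (\<Sum>m<2. D m a / fact m * (t - a) ^ m) + D 2 \<xi> / fact 2 * (t - a) ^ 2"
    using Taylor[of 2 D "D 0" "a - d" "a + d" a t] False t d by (auto simp: abs_le_iff)
  have "a - d \<le> \<xi>" using \<xi> t by (auto split: if_splits simp: abs_le_iff)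
  then have "\<xi> powr (q - 2) \<le> (a - d) powr (q - 2)"
    using powr_mono2'[of "q - 2" "a - d" \<xi>] q1 d by simp
  then have "q*(1 - q)/2 * \<xi> powr (q - 2) * (t - a)^2 \<le> q*(1 - q)/2 * (a - d) powr (q - 2) * (t - a)^2"
    using q0 q1 by (intro mult_right_mono mult_left_mono) auto
  moreover have "D 2 \<xi> / fact 2 * (t - a)^2 = - (q*(1 - q)/2 * \<xi> powr (q - 2) * (t - a)^2)"
    unfolding D_def by (simp add: field_simps)
  moreover have "(\<Sum>m<2. D m a / fact m * (t - a) ^ m) = a powr q + q * a powr (q - 1) * (t - a)"
    unfolding D_def by (simp add: numeral_2_eq_2)
  ultimately show ?thesis using taylor unfolding D_def by simp
qed simp

lemma abs_powr_ge_second_order: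
  fixes a d t q :: real
  assumes q0: "0 < q" and q1: "q < 1" and d: "0 < d" "d < \<bar>a\<bar>" and t: "\<bar>t - a\<bar> \<le> d"
  shows "\<bar>t\<bar> powr q \<ge> \<bar>a\<bar> powr q + q * sgn a * \<bar>a\<bar> powr (q - 1) * (t - a)
                        - q*(1 - q)/2 * (\<bar>a\<bar> - d) powr (q - 2) * (t - a)^2"
proof (cases "a > 0")
  case True
  then have "t > 0" using d t by (auto simp: abs_le_iff)
  then show ?thesis using powr_ge_second_order[OF q0 q1 d(1) _ t] d True by simp
next
  case False
  then have "a < 0" "t < 0" using d t by (auto simp: abs_le_iff)
  moreover have t': "\<bar>-t - (-a)\<bar> \<le> d" using t by simp
  ultimately show ?thesis
    using powr_ge_second_order[OF q0 q1 d(1) _ t'] d by (simp add: power2_commute algebra_simps)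
qed

section \<open>The smallest eigenvalue bounds the quadratic form\<close>

text \<open>Vectors are modelled as functions \<open>nat \<Rightarrow> real\<close> whose entries beyond the dimension are
  ignored, so that the compactness of the unit sphere comes from the product topology.\<close>

definition lin_comb :: "real mat \<Rightarrow> (nat \<Rightarrow> real) \<Rightarrow> nat \<Rightarrow> real" where
  "lin_comb B u j = (\<Sum>l<dim_col B. B $$ (j, l) * u l)"

definition quad_form :: "real mat \<Rightarrow> (nat \<Rightarrow> real) \<Rightarrow> real" where
  "quad_form B u = (\<Sum>j<dim_row B. (lin_comb B u j)^2)"

definition sq_norm :: "nat \<Rightarrow> (nat \<Rightarrow> real) \<Rightarrow> real" where
  "sq_norm k u = (\<Sum>l<k. (u l)^2)"

lemma lin_comb_add: "lin_comb B (\<lambda>l. u l + w l) j = lin_comb B u j + lin_comb B w j"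
  unfolding lin_comb_def by (simp add: algebra_simps sum.distrib)

lemma lin_comb_add_scaled: "lin_comb B (\<lambda>l. u l + t * w l) j = lin_comb B u j + t * lin_comb B w j"
  unfolding lin_comb_def by (simp add: algebra_simps sum.distrib sum_distrib_left)

lemma quad_form_add_scaled:
  "quad_form B (\<lambda>l. u l + t * w l)
     = quad_form B u + 2 * t * (\<Sum>j<dim_row B. lin_comb B u j * lin_comb B w j) + t^2 * quad_form B w"
  unfolding quad_form_def lin_comb_add_scaled
  by (simp add: power2_eq_square algebra_simps sum.distrib sum_distrib_left)

lemma sq_norm_add_scaled:
  "sq_norm k (\<lambda>l. u l + t * w l) = sq_norm k u + 2 * t * (\<Sum>l<k. u l * w l) + t^2 * sq_norm k w"
  unfolding sq_norm_def by (simp add: power2_eq_square algebra_simps sum.distrib sum_distrib_left)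

lemma quad_form_scale: "quad_form B (\<lambda>l. c * u l) = c^2 * quad_form B u"
  using quad_form_add_scaled[of B "\<lambda>_. 0" c u] unfolding quad_form_def lin_comb_def by simp

lemma sq_norm_scale: "sq_norm k (\<lambda>l. c * u l) = c^2 * sq_norm k u"
  unfolding sq_norm_def by (simp add: power_mult_distrib sum_distrib_left)

lemma quad_form_nonneg: "quad_form B u \<ge> 0"
  unfolding quad_form_def by (simp add: sum_nonneg)

lemma sq_norm_nonneg: "sq_norm k u \<ge> 0"
  unfolding sq_norm_def by (simp add: sum_nonneg)

lemma quad_form_cong: "(\<And>l. l < dim_col B \<Longrightarrow> u l = w l) \<Longrightarrow> quad_form B u = quad_form B w"
  unfolding quad_form_def lin_comb_def by simp

lemma sq_norm_cong: "(\<And>l. l < k \<Longrightarrow> u l = w l) \<Longrightarrow> sq_norm k u = sq_norm k w"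
  unfolding sq_norm_def by simp

lemma continuous_on_quad_form: "continuous_on UNIV (quad_form B)"
  unfolding quad_form_def lin_comb_def by (intro continuous_intros continuous_on_product_coordinates)

lemma continuous_on_sq_norm: "continuous_on UNIV (sq_norm k)"
  unfolding sq_norm_def by (intro continuous_intros continuous_on_product_coordinates)

lemma compact_unit_box: "compact {u :: nat \<Rightarrow> real. \<forall>l. u l \<in> (if l < k then {-1..1} else {0})}"
proof -
  have "compactin (product_topology (\<lambda>i. euclidean) UNIV) (PiE UNIV (\<lambda>l. if l < k then {-1..1::real} else {0}))"
    by (subst compactin_PiE) (auto simp: compactin_euclidean_iff)
  moreover have "PiE UNIV (\<lambda>l. if l < k then {-1..1::real} else {0})
      = {u. \<forall>l. u l \<in> (if l < k then {-1..1} else {0})}"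
    by (auto simp: PiE_def Pi_def)
  ultimately show ?thesis by (simp add: euclidean_product_topology compactin_euclidean_iff)
qed

lemma sq_norm_normalize:
  assumes "sq_norm k u \<noteq> 0"
  defines "w \<equiv> \<lambda>l. if l < k then u l / sqrt (sq_norm k u) else 0"
  shows "sq_norm k w = 1" and "\<forall>l. w l \<in> (if l < k then {-1..1} else {0})"
    and "k = dim_col B \<Longrightarrow> quad_form B w = quad_form B u / sq_norm k u"
proof -
  define s where "s = sqrt (sq_norm k u)"
  have s: "s > 0" "s^2 = sq_norm k u"
    using assms(1) sq_norm_nonneg[of k u] unfolding s_def by auto
  have w: "w l = (1/s) * u l" if "l < k" for l using that unfolding w_def s_def by simp
  show nw: "sq_norm k w = 1"
    using sq_norm_cong[of k w "\<lambda>l. (1/s) * u l"] w sq_norm_scale[of k "1/s" u] s assms(1)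
    by (simp add: power_divide)
  have "\<bar>w l\<bar> \<le> 1" if "l < k" for l
  proof -
    have "(w l)^2 \<le> sq_norm k w"
      unfolding sq_norm_def using that by (intro member_le_sum) auto
    then show ?thesis using nw abs_le_square_iff[of "w l" 1] by simp
  qed
  then show "\<forall>l. w l \<in> (if l < k then {-1..1} else {0})"
    by (metis abs_le_iff atLeastAtMost_iff minus_le_iff singletonI w_def)
  show "quad_form B w = quad_form B u / sq_norm k u" if "k = dim_col B"
    using quad_form_cong[of B w "\<lambda>l. (1/s) * u l"] w that quad_form_scale[of B "1/s" u] s
    by (simp add: power_divide)
qed

lemma quad_form_min_on_sphere:
  assumes "dim_col B > 0"
  shows "\<exists>u0. sq_norm (dim_col B) u0 = 1 \<and> (\<forall>u. quad_form B u \<ge> quad_form B u0 * sq_norm (dim_col B) u)"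
proof -
  define k where "k = dim_col B"
  define S where "S = {u :: nat \<Rightarrow> real. \<forall>l. u l \<in> (if l < k then {-1..1} else {0})} \<inter> {u. sq_norm k u = 1}"
  have "compact S" unfolding S_def
    by (intro compact_Int_closed compact_unit_box closed_Collect_eq continuous_on_const
        continuous_on_sq_norm[unfolded continuous_on_eq_continuous_at[OF open_UNIV]])
  moreover have "(\<lambda>l. if l = 0 then 1 else 0) \<in> S"
  proof -
    have "sq_norm k (\<lambda>l. if l = 0 then 1 else 0) = (\<Sum>l<k. if l = 0 then 1 else 0)"
      unfolding sq_norm_def by (intro sum.cong) auto
    then show ?thesis using assms unfolding S_def k_def by simp
  qed
  ultimately obtain u0 where u0: "u0 \<in> S" and u0_min: "\<forall>u\<in>S. quad_form B u0 \<le> quad_form B u"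
    using continuous_attains_inf continuous_on_subset[OF continuous_on_quad_form] by blast
  have "quad_form B u \<ge> quad_form B u0 * sq_norm k u" for u
  proof (cases "sq_norm k u = 0")
    case True then show ?thesis using quad_form_nonneg by simp
  next
    case False
    define w where "w = (\<lambda>l. if l < k then u l / sqrt (sq_norm k u) else 0)"
    have "w \<in> S" using sq_norm_normalize(1,2)[OF False] unfolding S_def w_def by blast
    then have "quad_form B u0 \<le> quad_form B w" using u0_min by blast
    also have "\<dots> = quad_form B u / sq_norm k u"
      unfolding w_def by (rule sq_norm_normalize(3)[OF False k_def])
    finally show ?thesis using False sq_norm_nonneg[of k u] by (simp add: field_simps)
  qed
  then show ?thesis using u0 unfolding S_def k_def by blast
qed

lemma linear_quadratic_nonneg_imp_zero:
  fixes b c :: real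
  assumes "\<And>t. 2 * t * b + t^2 * c \<ge> 0" shows "b = 0"
proof (rule ccontr)
  assume b: "b \<noteq> 0"
  have c: "c \<ge> 0" using assms[of 1] assms[of "-1"] by simp
  define d where "d = c + 1"
  define t where "t = - b / d"
  have d: "d > 0" using c unfolding d_def by simp
  have "t^2 * c \<le> t^2 * d" unfolding d_def by (simp add: mult_left_mono)
  also have "t^2 * d = b^2 / d" unfolding t_def using d by (simp add: power2_eq_square)
  finally have "2 * t * b + t^2 * c \<le> - (b^2 / d)"
    unfolding t_def using d by (simp add: power2_eq_square)
  also have "\<dots> < 0" using b d by simp
  finally show False using assms[of t] by simp
qed

text \<open>The first-order condition at a minimizer of the Rayleigh quotient, i.e. \<open>B\<^sup>T B v = r v\<close>.\<close>

lemma rayleigh_min_eigen_equation: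
  assumes min: "\<And>u. quad_form B u \<ge> r * sq_norm (dim_col B) u"
    and v: "quad_form B v = r * sq_norm (dim_col B) v" and l: "l < dim_col B"
  shows "(\<Sum>j<dim_row B. lin_comb B v j * B $$ (j, l)) = r * v l"
proof -
  define w where "w l' = (if l' = l then 1 else (0::real))" for l'
  have lin_comb_w: "lin_comb B w j = B $$ (j, l)" for j
    unfolding lin_comb_def w_def using l by (simp add: if_distrib cong: if_cong)
  have v_w: "(\<Sum>l'<dim_col B. v l' * w l') = v l"
    unfolding w_def using l by (simp add: if_distrib cong: if_cong)
  have "2 * t * ((\<Sum>j<dim_row B. lin_comb B v j * B $$ (j, l)) - r * v l)
      + t^2 * (quad_form B w - r * sq_norm (dim_col B) w) \<ge> 0" for t
    using min[of "\<lambda>l'. v l' + t * w l'"] v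
    unfolding quad_form_add_scaled sq_norm_add_scaled lin_comb_w v_w
    by (simp add: algebra_simps)
  then show ?thesis using linear_quadratic_nonneg_imp_zero by fastforce
qed

lemma finite_eigenvalues:
  assumes "(M :: real mat) \<in> carrier_mat k k" shows "finite {e. eigenvalue M e}"
proof -
  have "char_poly M \<noteq> 0" using degree_monic_char_poly[OF assms] by auto
  then have "finite {x. poly (char_poly M) x = 0}" by (rule poly_roots_finite)
  then show ?thesis using eigenvalue_root_char_poly[OF assms] by simp
qed

lemma quad_form_ge_lambda_min:
  assumes "dim_col B > 0"
  shows "quad_form B u \<ge> lambda_min (transpose_mat B * B) * sq_norm (dim_col B) u"
proof -
  define k where "k = dim_col B"
  define M where "M = transpose_mat B * B"
  obtain u0 where u0: "sq_norm k u0 = 1" and min: "\<And>u. quad_form B u \<ge> quad_form B u0 * sq_norm k u"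
    using quad_form_min_on_sphere[OF assms] unfolding k_def by blast
  define r where "r = quad_form B u0"
  have M: "M \<in> carrier_mat k k" unfolding M_def k_def carrier_mat_def by simp
  have "vec k u0 \<noteq> 0\<^sub>v k"
  proof
    assume "vec k u0 = 0\<^sub>v k"
    then have "u0 l = 0" if "l < k" for l using that by (metis index_vec index_zero_vec(1))
    then have "sq_norm k u0 = 0" unfolding sq_norm_def by simp
    then show False using u0 by simp
  qed
  moreover have "M *\<^sub>v vec k u0 = r \<cdot>\<^sub>v vec k u0"
  proof (rule eq_vecI)
    fix l assume "l < dim_vec (r \<cdot>\<^sub>v vec k u0)"
    then have l: "l < k" by simp
    have "(M *\<^sub>v vec k u0) $ l = (\<Sum>l'<k. (\<Sum>j<dim_row B. B $$ (j, l) * B $$ (j, l')) * u0 l')"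
      using l unfolding M_def k_def by (simp add: scalar_prod_def atLeast0LessThan)
    also have "\<dots> = (\<Sum>j<dim_row B. lin_comb B u0 j * B $$ (j, l))"
      unfolding lin_comb_def k_def
      by (simp add: sum_distrib_left sum_distrib_right sum.swap[of _ "{..<dim_row B}"] algebra_simps)
    also have "\<dots> = r * u0 l"
      using rayleigh_min_eigen_equation[where B=B and r=r and v=u0] min u0 l unfolding r_def k_def by simp
    finally show "(M *\<^sub>v vec k u0) $ l = (r \<cdot>\<^sub>v vec k u0) $ l" using l by simp
  qed (use M in simp)
  ultimately have "eigenvalue M r"
    unfolding eigenvalue_def eigenvector_def using M vec_carrier by blast
  then have "lambda_min M \<le> r"
    unfolding lambda_min_def using finite_eigenvalues[OF M] by (simp add: Min_le)
  then have "lambda_min M * sq_norm k u \<le> r * sq_norm k u"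
    using sq_norm_nonneg by (simp add: mult_right_mono)
  also have "\<dots> \<le> quad_form B u" using min unfolding r_def .
  finally show ?thesis unfolding M_def k_def .
qed

lemma pick_bij_betw: assumes "finite I" shows "bij_betw (pick I) {..<card I} I"
proof -
  have inj: "inj_on (pick I) {..<card I}"
    by (rule inj_onI) (metis lessThan_iff linorder_neqE_nat less_irrefl pick_mono)
  have "pick I ` {..<card I} \<subseteq> I" using pick_in_set by auto
  moreover have "card (pick I ` {..<card I}) = card I" using card_image[OF inj] by simp
  ultimately have "pick I ` {..<card I} = I" using card_subset_eq[OF assms] by blast
  then show ?thesis using inj unfolding bij_betw_def by blast
qed

lemma quad_form_ge_lambda_min_submatrix:
  fixes A :: "real mat"
  assumes I: "I \<subseteq> {..<dim_col A}" and h: "\<And>l. l \<notin> I \<Longrightarrow> h l = 0"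
  shows "quad_form A h \<ge> lambda_min (transpose_mat (submatrix A UNIV I) * submatrix A UNIV I) * (\<Sum>l\<in>I. (h l)^2)"
proof (cases "I = {}")
  case True
  then show ?thesis using quad_form_nonneg by simp
next
  case False
  define B where "B = submatrix A UNIV I"
  have fin: "finite I" using I finite_subset by blast
  note pick = pick_bij_betw[OF fin]
  have "{j. j < dim_col A \<and> j \<in> I} = I" using I by auto
  then have dims: "dim_col B = card I" "dim_row B = dim_row A"
    unfolding B_def dim_submatrix by simp_all
  have B: "B $$ (j, l) = A $$ (j, pick I l)" if "j < dim_row A" "l < card I" for j l
    unfolding B_def using submatrix_index[of j A UNIV l I] that \<open>{j. j < dim_col A \<and> j \<in> I} = I\<close>
      pick_UNIV by simp
  define u where "u l = h (pick I l)" for l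
  have "lin_comb B u j = lin_comb A h j" if "j < dim_row A" for j
  proof -
    have "lin_comb B u j = (\<Sum>i\<in>I. A $$ (j, i) * h i)"
      unfolding lin_comb_def dims u_def using B that sum.reindex_bij_betw[OF pick] by simp
    also have "\<dots> = lin_comb A h j"
      unfolding lin_comb_def using h I by (intro sum.mono_neutral_left) auto
    finally show ?thesis .
  qed
  then have "quad_form B u = quad_form A h" unfolding quad_form_def dims by simp
  moreover have "sq_norm (dim_col B) u = (\<Sum>l\<in>I. (h l)^2)"
    unfolding sq_norm_def dims u_def using sum.reindex_bij_betw[OF pick] by simp
  moreover have "dim_col B > 0" unfolding dims using fin False by (simp add: card_gt_0_iff)
  ultimately show ?thesis using quad_form_ge_lambda_min[of B u] unfolding B_def by simp
qed

section \<open>A second-order sufficient condition for strict local minimality\<close>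

definition lsq_grad :: "real mat \<Rightarrow> real vec \<Rightarrow> (nat \<Rightarrow> real) \<Rightarrow> nat \<Rightarrow> real" where
  "lsq_grad A y u l = (\<Sum>j<dim_row A. A $$ (j, l) * (lin_comb A u j - y $ j))"

definition T_fun :: "real mat \<Rightarrow> real vec \<Rightarrow> real \<Rightarrow> real \<Rightarrow> (nat \<Rightarrow> real) \<Rightarrow> real" where
  "T_fun A y lam q u = (1/2) * (\<Sum>j<dim_row A. (lin_comb A u j - y $ j)^2)
     + lam * (\<Sum>l<dim_col A. \<bar>u l\<bar> powr q)"

lemma T_fun_add:
  "T_fun A y lam q (\<lambda>l. u l + h l) - T_fun A y lam q u
     = (\<Sum>l<dim_col A. lsq_grad A y u l * h l) + quad_form A h / 2
       + lam * (\<Sum>l<dim_col A. \<bar>u l + h l\<bar> powr q - \<bar>u l\<bar> powr q)"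
proof -
  define r where "r j = lin_comb A u j - y $ j" for j
  have "(lin_comb A (\<lambda>l. u l + h l) j - y $ j)^2 - (r j)^2
      = 2 * (r j * lin_comb A h j) + (lin_comb A h j)^2" for j
    unfolding lin_comb_add r_def by (simp add: power2_eq_square algebra_simps)
  then have "(\<Sum>j<dim_row A. (lin_comb A (\<lambda>l. u l + h l) j - y $ j)^2) - (\<Sum>j<dim_row A. (r j)^2)
      = 2 * (\<Sum>j<dim_row A. r j * lin_comb A h j) + quad_form A h"
    unfolding quad_form_def by (simp add: sum_subtractf[symmetric] sum.distrib sum_distrib_left)
  moreover have "(\<Sum>j<dim_row A. r j * lin_comb A h j) = (\<Sum>l<dim_col A. lsq_grad A y u l * h l)"
  proof -
    have "(\<Sum>j<dim_row A. r j * lin_comb A h j)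
        = (\<Sum>j<dim_row A. \<Sum>l<dim_col A. A $$ (j, l) * r j * h l)"
      unfolding lin_comb_def by (simp add: sum_distrib_left mult_ac)
    also have "\<dots> = (\<Sum>l<dim_col A. \<Sum>j<dim_row A. A $$ (j, l) * r j * h l)"
      by (rule sum.swap)
    finally show ?thesis
      unfolding lsq_grad_def r_def by (simp add: sum_distrib_right)
  qed
  ultimately show ?thesis
    unfolding T_fun_def r_def[symmetric] sum_subtractf by (simp add: field_simps)
qed

lemma quad_form_add_ge:
  fixes A :: "real mat"
  defines "S \<equiv> \<Sum>j<dim_row A. \<Sum>l<dim_col A. \<bar>A $$ (j, l)\<bar>"
  assumes u: "\<And>l. l < dim_col A \<Longrightarrow> \<bar>u l\<bar> \<le> 1"
  shows "quad_form A (\<lambda>l. u l + w l) \<ge> quad_form A u - 2 * real (dim_row A) * S^2 * (\<Sum>l<dim_col A. \<bar>w l\<bar>)"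
proof -
  have S0: "S \<ge> 0" unfolding S_def by (intro sum_nonneg) auto
  have row: "(\<Sum>l<dim_col A. \<bar>A $$ (j, l)\<bar>) \<le> S" if "j < dim_row A" for j
    unfolding S_def using that by (intro member_le_sum) (auto intro: sum_nonneg)
  have entry: "\<bar>A $$ (j, l)\<bar> \<le> S" if "j < dim_row A" "l < dim_col A" for j l
    using member_le_sum[of l "{..<dim_col A}" "\<lambda>l. \<bar>A $$ (j, l)\<bar>"] that row[OF that(1)] by auto
  have per_row: "(lin_comb A (\<lambda>l. u l + w l) j)^2 \<ge> (lin_comb A u j)^2 - 2 * (S * (S * (\<Sum>l<dim_col A. \<bar>w l\<bar>)))"
    if j: "j < dim_row A" for j
  proof -
    have "\<bar>lin_comb A u j\<bar> \<le> (\<Sum>l<dim_col A. \<bar>A $$ (j, l)\<bar>)"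
      unfolding lin_comb_def using u
      by (intro order_trans[OF sum_abs] sum_mono) (auto simp: abs_mult intro: mult_left_le)
    also have "\<dots> \<le> S" using row[OF j] .
    finally have a: "\<bar>lin_comb A u j\<bar> \<le> S" .
    have "\<bar>lin_comb A w j\<bar> \<le> (\<Sum>l<dim_col A. S * \<bar>w l\<bar>)"
      unfolding lin_comb_def using entry[OF j]
      by (intro order_trans[OF sum_abs] sum_mono) (auto simp: abs_mult intro: mult_right_mono)
    then have b: "\<bar>lin_comb A w j\<bar> \<le> S * (\<Sum>l<dim_col A. \<bar>w l\<bar>)"
      by (simp add: sum_distrib_left)
    have "\<bar>lin_comb A u j * lin_comb A w j\<bar> \<le> S * (S * (\<Sum>l<dim_col A. \<bar>w l\<bar>))"
      unfolding abs_mult using a b S0 by (intro mult_mono) auto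
    then have "lin_comb A u j * lin_comb A w j \<ge> - (S * (S * (\<Sum>l<dim_col A. \<bar>w l\<bar>)))"
      by linarith
    moreover have "(lin_comb A u j + lin_comb A w j)^2
        = (lin_comb A u j)^2 + 2 * (lin_comb A u j * lin_comb A w j) + (lin_comb A w j)^2"
      by (simp add: power2_eq_square algebra_simps)
    ultimately show ?thesis
      unfolding lin_comb_add by (smt (verit) zero_le_power2)
  qed
  have "quad_form A u - real (dim_row A) * (2 * (S * (S * (\<Sum>l<dim_col A. \<bar>w l\<bar>))))
      = (\<Sum>j<dim_row A. (lin_comb A u j)^2 - 2 * (S * (S * (\<Sum>l<dim_col A. \<bar>w l\<bar>))))"
    unfolding quad_form_def by (simp add: sum_subtractf)
  also have "\<dots> \<le> quad_form A (\<lambda>l. u l + w l)"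
    unfolding quad_form_def using per_row by (intro sum_mono) auto
  moreover have "real (dim_row A) * (2 * (S * (S * W))) = 2 * real (dim_row A) * S^2 * W" for W
    by (simp add: power2_eq_square)
  ultimately show ?thesis by simp
qed

lemma linear_le_abs_powr:
  fixes c h \<delta> q lam :: real
  assumes "c \<ge> 0" "q < 1" "\<bar>h\<bar> \<le> \<delta>" "c * \<delta> powr (1 - q) < lam" "h \<noteq> 0"
  shows "c * \<bar>h\<bar> < lam * \<bar>h\<bar> powr q"
proof -
  have "c * \<bar>h\<bar> powr (1 - q) \<le> c * \<delta> powr (1 - q)"
    using assms by (intro mult_left_mono powr_mono2) auto
  then have "c * \<bar>h\<bar> powr (1 - q) * \<bar>h\<bar> powr q < lam * \<bar>h\<bar> powr q"
    using assms by (intro mult_strict_right_mono) auto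
  moreover have "\<bar>h\<bar> powr (1 - q) * \<bar>h\<bar> powr q = \<bar>h\<bar>"
    using assms(5) by (simp flip: powr_add)
  ultimately show ?thesis by (simp add: mult.assoc)
qed

lemma quad_form_split_support:
  fixes A :: "real mat"
  assumes I: "I \<subseteq> {..<dim_col A}" and h: "\<And>l. l < dim_col A \<Longrightarrow> \<bar>h l\<bar> < \<delta>" and \<delta>: "\<delta> \<le> 1"
  shows "quad_form A h \<ge> lambda_min (transpose_mat (submatrix A UNIV I) * submatrix A UNIV I) * (\<Sum>l\<in>I. (h l)^2)
      - 2 * (real (dim_row A) * (\<Sum>j<dim_row A. \<Sum>l<dim_col A. \<bar>A $$ (j, l)\<bar>)^2) * (\<Sum>l\<in>{..<dim_col A} - I. \<bar>h l\<bar>)"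
proof -
  define hI where "hI l = (if l \<in> I then h l else 0)" for l
  define hC where "hC l = (if l \<in> I then 0 else h l)" for l
  have "(\<lambda>l. hI l + hC l) = h" unfolding hI_def hC_def by auto
  moreover have "(\<Sum>l<dim_col A. \<bar>hC l\<bar>) = (\<Sum>l\<in>{..<dim_col A} - I. \<bar>h l\<bar>)"
    unfolding hC_def using I by (intro sum.mono_neutral_cong_right) auto
  moreover have "\<bar>hI l\<bar> \<le> 1" if "l < dim_col A" for l
    unfolding hI_def using h[OF that] \<delta> by auto
  ultimately have "quad_form A h \<ge> quad_form A hI
      - 2 * real (dim_row A) * (\<Sum>j<dim_row A. \<Sum>l<dim_col A. \<bar>A $$ (j, l)\<bar>)^2 * (\<Sum>l\<in>{..<dim_col A} - I. \<bar>h l\<bar>)"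
    using quad_form_add_ge[of A hI hC] by metis
  moreover have "quad_form A hI \<ge> lambda_min (transpose_mat (submatrix A UNIV I) * submatrix A UNIV I) * (\<Sum>l\<in>I. (h l)^2)"
    using quad_form_ge_lambda_min_submatrix[OF I, of hI] unfolding hI_def by simp
  ultimately show ?thesis by (simp add: mult.assoc)
qed

lemma support_term_ge:
  fixes a g h \<delta> lam q :: real
  assumes lam: "lam > 0" and q: "0 < q" "q < 1" and \<delta>: "0 < \<delta>" "\<delta> < \<bar>a\<bar>" and h: "\<bar>h\<bar> \<le> \<delta>"
    and stat: "g + lam * q * sgn a * \<bar>a\<bar> powr (q - 1) = 0"
  shows "g * h + lam * (\<bar>a + h\<bar> powr q - \<bar>a\<bar> powr q)
           \<ge> - (lam * q * (1 - q) * (\<bar>a\<bar> - \<delta>) powr (q - 2) / 2) * h^2"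
proof -
  have "\<bar>a + h\<bar> powr q - \<bar>a\<bar> powr q
      \<ge> q * sgn a * \<bar>a\<bar> powr (q - 1) * h - q*(1 - q)/2 * (\<bar>a\<bar> - \<delta>) powr (q - 2) * h^2"
    using abs_powr_ge_second_order[OF q \<delta>, of "a + h"] h by simp
  then have "lam * (\<bar>a + h\<bar> powr q - \<bar>a\<bar> powr q)
      \<ge> lam * (q * sgn a * \<bar>a\<bar> powr (q - 1) * h - q*(1 - q)/2 * (\<bar>a\<bar> - \<delta>) powr (q - 2) * h^2)"
    using lam by (intro mult_left_mono) auto
  then show ?thesis
    using stat by (simp add: algebra_simps add_eq_0_iff2)
qed

lemma off_support_term_pos:
  fixes g h \<delta> lam q M :: real
  assumes "(\<bar>g\<bar> + M) * \<delta> powr (1 - q) < lam" "M \<ge> 0" "q < 1" "\<bar>h\<bar> \<le> \<delta>" "h \<noteq> 0"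
  shows "g * h + lam * \<bar>h\<bar> powr q - M * \<bar>h\<bar> > 0"
proof -
  have "(\<bar>g\<bar> + M) * \<bar>h\<bar> < lam * \<bar>h\<bar> powr q"
    using linear_le_abs_powr[of "\<bar>g\<bar> + M"] assms by simp
  moreover have "g * h \<ge> - (\<bar>g\<bar> * \<bar>h\<bar>)"
    by (metis abs_ge_minus_self abs_mult minus_le_iff)
  ultimately show ?thesis by (simp add: algebra_simps)
qed

lemma T_fun_increment_ge:
  fixes A :: "real mat" and y :: "real vec" and xs h :: "nat \<Rightarrow> real"
  defines "I \<equiv> {i. i < dim_col A \<and> xs i \<noteq> 0}"
    and "S \<equiv> \<Sum>j<dim_row A. \<Sum>l<dim_col A. \<bar>A $$ (j, l)\<bar>"
  assumes lam: "lam > 0" and q: "0 < q" "q < 1"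
    and stat: "\<And>i. i \<in> I \<Longrightarrow> lsq_grad A y xs i + lam * q * sgn (xs i) * \<bar>xs i\<bar> powr (q - 1) = 0"
    and \<delta>: "0 < \<delta>" "\<delta> \<le> 1" "\<And>i. i \<in> I \<Longrightarrow> \<delta> < \<bar>xs i\<bar>"
    and h: "\<And>l. l < dim_col A \<Longrightarrow> \<bar>h l\<bar> < \<delta>"
  shows "T_fun A y lam q (\<lambda>l. xs l + h l) - T_fun A y lam q xs
    \<ge> (\<Sum>l\<in>I. (lambda_min (transpose_mat (submatrix A UNIV I) * submatrix A UNIV I)
                 - lam * q * (1 - q) * (\<bar>xs l\<bar> - \<delta>) powr (q - 2)) / 2 * (h l)^2)
      + (\<Sum>l\<in>{..<dim_col A} - I. lsq_grad A y xs l * h l + lam * \<bar>h l\<bar> powr q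
                                   - real (dim_row A) * S^2 * \<bar>h l\<bar>)"
proof -
  define N where "N = dim_col A"
  define M where "M = real (dim_row A) * S^2"
  define lmin where "lmin = lambda_min (transpose_mat (submatrix A UNIV I) * submatrix A UNIV I)"
  define g where "g = lsq_grad A y xs"
  define C where "C = {..<N} - I"
  define F where "F l = g l * h l + lam * (\<bar>xs l + h l\<bar> powr q - \<bar>xs l\<bar> powr q)" for l
  define K where "K l = lam * q * (1 - q) * (\<bar>xs l\<bar> - \<delta>) powr (q - 2)" for l
  have IN: "I \<subseteq> {..<N}" unfolding I_def N_def by auto
  have "T_fun A y lam q (\<lambda>l. xs l + h l) - T_fun A y lam q xs
      = (\<Sum>l\<in>I. F l) + (\<Sum>l\<in>C. F l) + quad_form A h / 2"
  proof -
    have "(\<Sum>l<N. F l) = (\<Sum>l<N. g l * h l) + lam * (\<Sum>l<N. \<bar>xs l + h l\<bar> powr q - \<bar>xs l\<bar> powr q)"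
      unfolding F_def by (simp add: sum.distrib sum_distrib_left)
    moreover have "(\<Sum>l<N. F l) = (\<Sum>l\<in>I. F l) + (\<Sum>l\<in>C. F l)"
      unfolding C_def using sum.subset_diff[OF IN] by (simp add: add.commute)
    ultimately show ?thesis using T_fun_add[of A y lam q xs h] unfolding g_def N_def by simp
  qed
  moreover have "(\<Sum>l\<in>I. F l) \<ge> (\<Sum>l\<in>I. - (K l / 2) * (h l)^2)"
  proof (rule sum_mono)
    fix l assume l: "l \<in> I"
    then have "\<bar>h l\<bar> \<le> \<delta>" using h unfolding I_def by (simp add: less_imp_le)
    then show "- (K l / 2) * (h l)^2 \<le> F l"
      using support_term_ge[OF lam q \<delta>(1) \<delta>(3)[OF l] _ stat[OF l]] unfolding F_def g_def K_def
      by simp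
  qed
  moreover have "quad_form A h \<ge> lmin * (\<Sum>l\<in>I. (h l)^2) - 2 * (M * (\<Sum>l\<in>C. \<bar>h l\<bar>))"
    using quad_form_split_support[of I A h \<delta>] IN h \<delta>(2)
    unfolding lmin_def M_def S_def N_def C_def by (simp add: mult.assoc)
  moreover have "(\<Sum>l\<in>I. (lmin - K l) / 2 * (h l)^2)
      = (lmin * (\<Sum>l\<in>I. (h l)^2) - (\<Sum>l\<in>I. K l * (h l)^2)) / 2"
  proof -
    have "(\<Sum>l\<in>I. (lmin - K l) / 2 * (h l)^2) = (\<Sum>l\<in>I. lmin * (h l)^2 - K l * (h l)^2) / 2"
      unfolding sum_divide_distrib by (intro sum.cong) (auto simp: algebra_simps)
    then show ?thesis by (simp add: sum_subtractf sum_distrib_left)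
  qed
  moreover have "(\<Sum>l\<in>I. - (K l / 2) * (h l)^2) = - (\<Sum>l\<in>I. K l * (h l)^2) / 2"
    by (simp add: sum_negf sum_divide_distrib)
  moreover have "(\<Sum>l\<in>C. F l) - M * (\<Sum>l\<in>C. \<bar>h l\<bar>)
      = (\<Sum>l\<in>C. g l * h l + lam * \<bar>h l\<bar> powr q - M * \<bar>h l\<bar>)"
    unfolding F_def C_def I_def N_def by (auto simp: sum_subtractf sum_distrib_left intro!: sum.cong)
  ultimately show ?thesis
    unfolding lmin_def K_def C_def N_def g_def M_def by argo
qed

lemma T_fun_perturb_gt:
  fixes A :: "real mat" and y :: "real vec" and xs h :: "nat \<Rightarrow> real"
  defines "I \<equiv> {i. i < dim_col A \<and> xs i \<noteq> 0}"
    and "S \<equiv> \<Sum>j<dim_row A. \<Sum>l<dim_col A. \<bar>A $$ (j, l)\<bar>"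
  assumes lam: "lam > 0" and q: "0 < q" "q < 1"
    and stat: "\<And>i. i \<in> I \<Longrightarrow> lsq_grad A y xs i + lam * q * sgn (xs i) * \<bar>xs i\<bar> powr (q - 1) = 0"
    and \<delta>: "0 < \<delta>" "\<delta> \<le> 1" "\<And>i. i \<in> I \<Longrightarrow> \<delta> < \<bar>xs i\<bar>"
      "\<And>i. i \<in> I \<Longrightarrow> lam * q * (1 - q) * (\<bar>xs i\<bar> - \<delta>) powr (q - 2)
               < lambda_min (transpose_mat (submatrix A UNIV I) * submatrix A UNIV I)"
      "((\<Sum>l<dim_col A. \<bar>lsq_grad A y xs l\<bar>) + real (dim_row A) * S^2) * \<delta> powr (1 - q) < lam"
    and h: "\<And>l. l < dim_col A \<Longrightarrow> \<bar>h l\<bar> < \<delta>" "\<exists>l<dim_col A. h l \<noteq> 0"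
  shows "T_fun A y lam q xs < T_fun A y lam q (\<lambda>l. xs l + h l)"
proof -
  define N where "N = dim_col A"
  define M where "M = real (dim_row A) * S^2"
  define C where "C = {..<N} - I"
  define p where "p l = (lambda_min (transpose_mat (submatrix A UNIV I) * submatrix A UNIV I)
                         - lam * q * (1 - q) * (\<bar>xs l\<bar> - \<delta>) powr (q - 2)) / 2 * (h l)^2" for l
  define r where "r l = lsq_grad A y xs l * h l + lam * \<bar>h l\<bar> powr q - M * \<bar>h l\<bar>" for l
  have fin: "finite I" "finite C" unfolding I_def C_def by auto
  have p: "p l \<ge> 0" "h l \<noteq> 0 \<Longrightarrow> p l > 0" if "l \<in> I" for l
    using \<delta>(4)[OF that] unfolding p_def by auto
  have r: "r l \<ge> 0" "h l \<noteq> 0 \<Longrightarrow> r l > 0" if "l \<in> C" for l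
  proof -
    have l: "l < N" using that unfolding C_def by simp
    have "\<bar>lsq_grad A y xs l\<bar> \<le> (\<Sum>l<N. \<bar>lsq_grad A y xs l\<bar>)" using l by (intro member_le_sum) auto
    then have "(\<bar>lsq_grad A y xs l\<bar> + M) * \<delta> powr (1 - q) < lam"
      using \<delta>(5) unfolding M_def N_def by (smt (verit) mult_right_mono powr_ge_zero)
    then show "h l \<noteq> 0 \<Longrightarrow> r l > 0"
      using off_support_term_pos[OF _ _ q(2)] h(1) l unfolding r_def N_def M_def by (simp add: less_imp_le)
    then show "r l \<ge> 0" unfolding r_def by (cases "h l = 0") auto
  qed
  obtain l where "l < N" "h l \<noteq> 0" using h(2) unfolding N_def by blast
  then consider "l \<in> I" "p l > 0" | "l \<in> C" "r l > 0" using p r unfolding C_def by blast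
  then have pos: "sum p I + sum r C > 0"
  proof cases
    case 1
    then show ?thesis using sum_pos2[of I l p] fin p(1) r(1) by (simp add: add_pos_nonneg sum_nonneg)
  next
    case 2
    then show ?thesis using sum_pos2[of C l r] fin p(1) r(1) by (simp add: add_nonneg_pos sum_nonneg)
  qed
  have "T_fun A y lam q (\<lambda>l. xs l + h l) - T_fun A y lam q xs \<ge> sum p I + sum r C"
    using T_fun_increment_ge[where A = A and y = y and xs = xs and h = h and \<delta> = \<delta>, OF lam q]
      stat \<delta>(1-3) h(1) unfolding p_def r_def M_def C_def N_def I_def S_def by blast
  then show ?thesis using pos by simp
qed

lemma lin_comb_vec:
  assumes "dim_vec v = dim_col A" "j < dim_row A"
  shows "(A *\<^sub>v v) $ j = lin_comb A (($) v) j"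
  using assms unfolding lin_comb_def by (simp add: scalar_prod_def atLeast0LessThan)

lemma T_obj_eq_T_fun:
  assumes "dim_vec v = dim_col A"
  shows "T_obj A y lam q v = T_fun A y lam q (($) v)"
proof -
  have "(\<Sum>j<dim_row A. ((A *\<^sub>v v) $ j - y $ j)^2) = (\<Sum>j<dim_row A. (lin_comb A (($) v) j - y $ j)^2)"
    using lin_comb_vec[OF assms] by (intro sum.cong) auto
  then show ?thesis unfolding T_obj_def T_fun_def by simp
qed

lemma small_delta_exists:
  fixes a :: "nat \<Rightarrow> real" and c L Cm lam q :: real
  assumes fin: "finite I" and a: "\<And>l. l \<in> I \<Longrightarrow> a l > 0"
    and aL: "\<And>l. l \<in> I \<Longrightarrow> c * a l powr (q - 2) < L" and lam: "lam > 0" and q: "q < 1"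
  shows "\<exists>\<delta>>0. \<delta> \<le> 1 \<and> (\<forall>l\<in>I. \<delta> < a l \<and> c * (a l - \<delta>) powr (q - 2) < L)
           \<and> Cm * \<delta> powr (1 - q) < lam"
proof -
  have id: "((\<lambda>\<delta>. \<delta>) \<longlongrightarrow> 0) (at_right (0::real))" by (rule tendsto_ident_at)
  have ev_l: "eventually (\<lambda>\<delta>. \<delta> < a l \<and> c * (a l - \<delta>) powr (q - 2) < L) (at_right 0)"
    if l: "l \<in> I" for l
  proof -
    have "((\<lambda>\<delta>. c * (a l - \<delta>) powr (q - 2)) \<longlongrightarrow> c * (a l - 0) powr (q - 2)) (at_right 0)"
      using a[OF l] by (intro tendsto_intros id) auto
    then have "eventually (\<lambda>\<delta>. c * (a l - \<delta>) powr (q - 2) < L) (at_right 0)"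
      using order_tendstoD(2) aL[OF l] by simp
    moreover have "eventually (\<lambda>\<delta>. \<delta> < a l) (at_right 0)"
      using order_tendstoD(2)[OF id a[OF l]] .
    ultimately show ?thesis by eventually_elim blast
  qed
  have "eventually (\<lambda>\<delta>. \<forall>l\<in>I. \<delta> < a l \<and> c * (a l - \<delta>) powr (q - 2) < L) (at_right 0)"
    using ev_l by (intro eventually_ball_finite[OF fin] ballI)
  moreover have "((\<lambda>\<delta>. Cm * \<delta> powr (1 - q)) \<longlongrightarrow> Cm * 0 powr (1 - q)) (at_right (0::real))"
    using q by (intro tendsto_intros id) (auto simp: eventually_at_right_field intro: exI[of _ 1])
  then have "eventually (\<lambda>\<delta>. Cm * \<delta> powr (1 - q) < lam) (at_right (0::real))"
    using order_tendstoD(2) lam by simp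
  moreover have "eventually (\<lambda>\<delta>. \<delta> > 0 \<and> \<delta> \<le> 1) (at_right (0::real))"
    unfolding eventually_at_right_field by (intro exI[of _ 1]) auto
  ultimately have "eventually (\<lambda>\<delta>. \<delta> > 0 \<and> \<delta> \<le> 1 \<and> (\<forall>l\<in>I. \<delta> < a l \<and> c * (a l - \<delta>) powr (q - 2) < L)
      \<and> Cm * \<delta> powr (1 - q) < lam) (at_right 0)"
    by eventually_elim blast
  then show ?thesis
    using eventually_happens'[OF trivial_limit_at_right_real] by blast
qed

lemma stationary_strict_local_min:
  fixes A :: "real mat" and y xs :: "real vec"
  defines "I \<equiv> supp xs"
  assumes xs_dim: "dim_vec xs = dim_col A" and lam: "lam > 0" and q: "0 < q" "q < 1"
    and stat: "\<And>i. i \<in> I \<Longrightarrow> lsq_grad A y (($) xs) i + lam * q * sgn (xs $ i) * \<bar>xs $ i\<bar> powr (q - 1) = 0"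
    and curv: "\<And>i. i \<in> I \<Longrightarrow> lam * q * (1 - q) * \<bar>xs $ i\<bar> powr (q - 2)
                 < lambda_min (transpose_mat (submatrix A UNIV I) * submatrix A UNIV I)"
  shows "strict_local_min (dim_col A) (T_obj A y lam q) xs"
proof -
  have I: "I = {i. i < dim_col A \<and> xs $ i \<noteq> 0}" unfolding I_def supp_def xs_dim ..
  define lmin where "lmin = lambda_min (transpose_mat (submatrix A UNIV I) * submatrix A UNIV I)"
  define Cm where "Cm = (\<Sum>l<dim_col A. \<bar>lsq_grad A y (($) xs) l\<bar>)
       + real (dim_row A) * (\<Sum>j<dim_row A. \<Sum>l<dim_col A. \<bar>A $$ (j, l)\<bar>)^2"
  have "\<exists>\<delta>>0. \<delta> \<le> 1 \<and> (\<forall>i\<in>I. \<delta> < \<bar>xs $ i\<bar> \<and> lam * q * (1 - q) * (\<bar>xs $ i\<bar> - \<delta>) powr (q - 2) < lmin)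
      \<and> Cm * \<delta> powr (1 - q) < lam"
    using curv lam q I unfolding lmin_def by (intro small_delta_exists) auto
  then obtain \<delta> where \<delta>: "\<delta> > 0" "\<delta> \<le> 1"
    "\<forall>i\<in>I. \<delta> < \<bar>xs $ i\<bar> \<and> lam * q * (1 - q) * (\<bar>xs $ i\<bar> - \<delta>) powr (q - 2) < lmin"
    "Cm * \<delta> powr (1 - q) < lam"
    by blast
  show ?thesis unfolding strict_local_min_def
  proof (intro exI[of _ \<delta>] conjI allI impI)
    fix v assume v: "dim_vec v = dim_col A \<and> v \<noteq> xs \<and> sqrt (\<Sum>i<dim_col A. (v $ i - xs $ i)^2) < \<delta>"
    define h where "h l = v $ l - xs $ l" for l
    have "\<bar>h l\<bar> < \<delta>" if "l < dim_col A" for l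
    proof -
      have "(h l)^2 \<le> (\<Sum>i<dim_col A. (h i)^2)" using that by (intro member_le_sum) auto
      then have "sqrt ((h l)^2) \<le> sqrt (\<Sum>i<dim_col A. (h i)^2)"
        by (rule real_sqrt_le_mono)
      then show ?thesis using v unfolding h_def by simp
    qed
    moreover have "\<exists>l<dim_col A. h l \<noteq> 0"
    proof (rule ccontr)
      assume "\<not> (\<exists>l<dim_col A. h l \<noteq> 0)"
      then have "v = xs" using v xs_dim by (intro eq_vecI) (auto simp: h_def)
      then show False using v by simp
    qed
    ultimately have "T_fun A y lam q (($) xs) < T_fun A y lam q (\<lambda>l. xs $ l + h l)"
      using stat \<delta> unfolding I lmin_def Cm_def by (intro T_fun_perturb_gt[OF lam q]) auto
    moreover have "T_fun A y lam q (\<lambda>l. xs $ l + h l) = T_obj A y lam q v"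
      using T_obj_eq_T_fun[of v A y lam q] v unfolding h_def by simp
    moreover have "T_obj A y lam q xs = T_fun A y lam q (($) xs)"
      using T_obj_eq_T_fun[OF xs_dim] .
    ultimately show "T_obj A y lam q xs < T_obj A y lam q v" by simp
  qed (use \<delta> in simp)
qed

section \<open>Limits of GAITA\<close>

lemma gaita_dim:
  assumes "dim_vec (x 0) = dim_col A" "\<And>n. x (Suc n) = gaita_step A y lam q mu n (x n)"
  shows "dim_vec (x n) = dim_col A"
  using assms by (cases n) (simp_all add: gaita_step_def Let_def)

lemma col_scalar_prod_residual:
  assumes "dim_vec v = dim_col A" "dim_vec y = dim_row A" "i < dim_col A"
  shows "col A i \<bullet> (A *\<^sub>v v - y) = lsq_grad A y (($) v) i"
  using assms unfolding lsq_grad_def lin_comb_def by (simp add: scalar_prod_def atLeast0LessThan)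

lemma gaita_limit_stationary:
  fixes A :: "real mat" and y :: "real vec" and x :: "nat \<Rightarrow> real vec" and xstar :: "real vec"
  assumes N_pos: "dim_col A > 0" and y_dim: "dim_vec y = dim_row A"
    and lam: "lam > 0" and q: "0 < q" "q < 1" and mu: "mu > 0"
    and x0_dim: "dim_vec (x 0) = dim_col A"
    and gaita: "\<And>n. x (Suc n) = gaita_step A y lam q mu n (x n)"
    and conv: "\<And>l. l < dim_col A \<Longrightarrow> (\<lambda>n. x n $ l) \<longlonglongrightarrow> xstar $ l"
    and i: "i < dim_col A" and xi: "xstar $ i \<noteq> 0"
  shows "eta lam mu q \<le> \<bar>xstar $ i\<bar>"
    and "lsq_grad A y (($) xstar) i + lam * q * sgn (xstar $ i) * \<bar>xstar $ i\<bar> powr (q - 1) = 0"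
proof -
  define N where "N = dim_col A"
  \<comment> \<open>coordinate \<open>i\<close> is updated at the steps \<open>s k\<close>\<close>
  define s where "s k = k * N + i" for k
  have "strict_mono s" unfolding s_def N_def using N_pos by (intro strict_monoI) simp
  then have x_s: "(\<lambda>k. x (s k) $ l) \<longlonglongrightarrow> xstar $ l" if "l < N" for l
    using LIMSEQ_subseq_LIMSEQ[OF conv] that unfolding N_def by (simp add: o_def)
  have "strict_mono (\<lambda>k. Suc (s k))" using \<open>strict_mono s\<close> by (simp add: strict_mono_def)
  then have v: "(\<lambda>k. x (Suc (s k)) $ i) \<longlonglongrightarrow> xstar $ i"
    using LIMSEQ_subseq_LIMSEQ[OF conv[OF i]] by (simp add: o_def)
  define z where "z k = x (s k) $ i - mu * lsq_grad A y (($) (x (s k))) i" for k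
  have "s k mod N = i" for k unfolding s_def using i N_def by simp
  then have step: "x (Suc (s k)) $ i = thr mu lam q (z k) (x (s k) $ i)" for k
    using gaita_dim[OF x0_dim gaita] col_scalar_prod_residual[OF _ y_dim i] i
    unfolding gaita z_def gaita_step_def Let_def N_def by simp
  have "z \<longlonglongrightarrow> xstar $ i - mu * lsq_grad A y (($) xstar) i"
    unfolding z_def lsq_grad_def lin_comb_def using i x_s N_def by (intro tendsto_intros) auto
  note lim = thr_limit[OF mu lam q v xi this step]
  show "eta lam mu q \<le> \<bar>xstar $ i\<bar>" using lim(1) .
  have "mu * (lsq_grad A y (($) xstar) i + lam * q * sgn (xstar $ i) * \<bar>xstar $ i\<bar> powr (q - 1)) = 0"
    using lim(2) by (simp add: algebra_simps)
  then show "lsq_grad A y (($) xstar) i + lam * q * sgn (xstar $ i) * \<bar>xstar $ i\<bar> powr (q - 1) = 0"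
    using mu by simp
qed

lemma curvature_bound_from_min:
  fixes lam q lmin e a :: real
  assumes q: "0 < q" "q < 1" and e: "0 < e" "e \<le> a" and lam_pos: "lam > 0"
    and lam: "lam < lmin * e powr (2 - q) / (q * (1 - q))"
  shows "lam * q * (1 - q) * a powr (q - 2) < lmin"
proof -
  have "a powr (q - 2) \<le> e powr (q - 2)"
    using powr_mono2'[of "q - 2" e a] q e by simp
  then have "lam * q * (1 - q) * a powr (q - 2) \<le> lam * q * (1 - q) * e powr (q - 2)"
    using lam_pos q by (intro mult_left_mono) auto
  also have "\<dots> < lmin * e powr (2 - q) * e powr (q - 2)"
    using lam q e by (intro mult_strict_right_mono) (auto simp: pos_less_divide_eq mult.assoc)
  also have "\<dots> = lmin"
    using e by (simp add: mult.assoc flip: powr_add)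
  finally show ?thesis .
qed

lemma curvature_bound_from_eta:
  fixes lam q mu lmin a :: real
  assumes mu: "mu > 0" and lam: "lam > 0" and q: "0 < q" "q < 1"
    and a: "eta lam mu q \<le> a" and lmin: "q / (2 * mu) < lmin"
  shows "lam * q * (1 - q) * a powr (q - 2) < lmin"
proof -
  have "a powr (q - 2) \<le> eta lam mu q powr (q - 2)"
    using powr_mono2'[of "q - 2" "eta lam mu q" a] q a eta_pos[OF mu lam q] by simp
  also have "\<dots> = 1 / (2*lam*mu*(1 - q))"
    using eta_powr[OF mu lam q] by (simp add: powr_minus_divide[of _ "2 - q", simplified])
  finally have "lam * q * (1 - q) * a powr (q - 2) \<le> lam * q * (1 - q) * (1 / (2*lam*mu*(1 - q)))"
    using lam q by (intro mult_left_mono) auto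
  also have "\<dots> = q / (2 * mu)" using lam mu q by (simp add: field_simps)
  finally show ?thesis using lmin by simp
qed

lemma curvature_condition:
  fixes lam q mu lmin e a L :: real
  assumes mu: "0 < mu" "mu < 1 / L" and lam: "lam > 0" and q: "0 < q" "q < 1"
    and a: "eta lam mu q \<le> a" "0 < e" "e \<le> a"
    and cond: "(lmin > 0 \<and> 0 < lam \<and> lam < lmin * e powr (2 - q) / (q * (1 - q)))
               \<or> (lmin / L > q / 2 \<and> q / (2 * lmin) < mu \<and> mu < 1 / L)"
  shows "lam * q * (1 - q) * a powr (q - 2) < lmin"
  using cond
proof (elim disjE conjE)
  assume "lam < lmin * e powr (2 - q) / (q * (1 - q))"
  then show ?thesis using curvature_bound_from_min q a(2,3) lam by blast
next
  assume lmin: "lmin / L > q / 2" "q / (2 * lmin) < mu"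
  have "1 / L > 0" using mu by linarith
  moreover have "lmin / L > 0" using lmin(1) q by linarith
  ultimately have "lmin > 0" by (simp add: zero_less_divide_iff)
  then have "q / (2 * mu) < lmin" using lmin(2) mu by (simp add: field_simps)
  then show ?thesis using curvature_bound_from_eta mu(1) lam q a(1) by blast
qed

theorem theorem6:
  fixes A :: "real mat" and y :: "real vec" and lam q mu :: real
    and x :: "nat \<Rightarrow> real vec" and xstar :: "real vec"
  assumes N_pos: "dim_col A > 0"
    and y_dim: "dim_vec y = dim_row A"
    and lam_pos: "lam > 0" and q_pos: "0 < q" and q_lt1: "q < 1"
    and mu_pos: "0 < mu" and mu_lt: "mu < 1 / Lmax A"
    and x0_dim: "dim_vec (x 0) = dim_col A"
    and gaita: "\<And>n. x (Suc n) = gaita_step A y lam q mu n (x n)"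
    and xstar_dim: "dim_vec xstar = dim_col A"
    and conv: "\<And>i. i < dim_col A \<Longrightarrow> (\<lambda>n. x n $ i) \<longlonglongrightarrow> xstar $ i"
    and cond: "(let I = supp xstar;
                    lmin = lambda_min (transpose_mat (submatrix A UNIV I) * submatrix A UNIV I);
                    e = Min ((\<lambda>i. \<bar>xstar $ i\<bar>) ` I)
                in (lmin > 0 \<and> 0 < lam \<and> lam < lmin * e powr (2 - q) / (q * (1 - q)))
                 \<or> (lmin / Lmax A > q / 2 \<and> q / (2 * lmin) < mu \<and> mu < 1 / Lmax A))"
  shows "strict_local_min (dim_col A) (T_obj A y lam q) xstar"
proof -
  define I where "I = supp xstar"
  define lmin where "lmin = lambda_min (transpose_mat (submatrix A UNIV I) * submatrix A UNIV I)"
  define e where "e = Min ((\<lambda>i. \<bar>xstar $ i\<bar>) ` I)"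
  have I: "I = {i. i < dim_col A \<and> xstar $ i \<noteq> 0}" unfolding I_def supp_def xstar_dim ..
  note limit = gaita_limit_stationary[OF N_pos y_dim lam_pos q_pos q_lt1 mu_pos x0_dim gaita conv]
  have "lam * q * (1 - q) * \<bar>xstar $ i\<bar> powr (q - 2) < lmin" if i: "i \<in> I" for i
  proof (rule curvature_condition[OF mu_pos mu_lt lam_pos q_pos q_lt1])
    show "eta lam mu q \<le> \<bar>xstar $ i\<bar>" using limit(1) i I by auto
    have fin: "finite I" using I by simp
    show "e \<le> \<bar>xstar $ i\<bar>" unfolding e_def using fin i by (intro Min_le) auto
    have "e \<in> (\<lambda>i. \<bar>xstar $ i\<bar>) ` I" unfolding e_def using fin i by (intro Min_in) auto
    then show "0 < e" using I by auto
    show "(lmin > 0 \<and> 0 < lam \<and> lam < lmin * e powr (2 - q) / (q * (1 - q)))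
        \<or> (lmin / Lmax A > q / 2 \<and> q / (2 * lmin) < mu \<and> mu < 1 / Lmax A)"
      using cond unfolding Let_def I_def[symmetric] lmin_def[symmetric] e_def[symmetric] .
  qed
  then show ?thesis
    using stationary_strict_local_min[OF xstar_dim lam_pos q_pos q_lt1] limit(2) I
    unfolding I_def lmin_def by auto
qed

end
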